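(* Let $1\le p\le N$ and let $\Omega=\bm\omega^1\wedge\dots\wedge\bm\omega^p$ be a simple $p$-form. Then each of $\vec\omega^1,\dots,\vec\omega^p$ is an eigenvector of its superenergy tensor $T_{ab}\{\Omega_{[p]}\}$, all with the same eigenvalue $\frac{(-1)^{p-1}(\Omega\cdot\Omega)}{2\,p!}$, i.e. $\omega^i_aT_b{}^a\{\Omega_{[p]}\}=\frac{(-1)^{p-1}(\Omega\cdot\Omega)}{2\,p!}\omega^i_b$ for $i=1,\dots,p$.
   Context: Lorentzian metric $g_{ab}$ of signature $(+,-,\dots,-)$ in dimension $N$; $\Omega\cdot\Omega$ is full contraction; simple $p$-form: wedge product of $p$ linearly independent 1-forms $\bm\omega^i$, with $\vec\omega^i$ the corresponding vectors. Superenergy tensor: $T_{ab}\{\Omega_{[p]}\}=\frac{(-1)^{p-1}}{(p-1)!}[\Omega_{a a_2\dots a_p}\Omega_b{}^{a_2\dots a_p}-\frac{1}{2p}(\Omega\cdot\Omega)g_{ab}]$ (equal to $\frac12 f^2 g_{ab}$ if $\Omega=f\eta$ is an $N$-form). *)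

theory Defs
  imports "HOL-Analysis.Analysis" "HOL-Combinatorics.Permutations"
begin

text \<open>Abstract index set: a finite type 'n, with N = CARD('n).
  Tensors are given by components in a fixed basis. The metric g is a real
  matrix g$a$b (lower indices); its inverse (upper indices) is matrix_inv g.\<close>

definition lorentzian :: "real^'n^'n \<Rightarrow> bool" where
  "lorentzian g \<longleftrightarrow> transpose g = g \<and>
     (\<exists>E :: real^'n^'n. \<exists>i0. invertible E \<and>
        (\<forall>i j. (transpose E ** g ** E) $ i $ j =
                (if i = j then (if i = i0 then 1 else -1) else 0)))"

definition tuples :: "nat \<Rightarrow> 'n list set" where
  "tuples k = {xs. length xs = k}"

definition wedge :: "nat \<Rightarrow> (nat \<Rightarrow> real^'n) \<Rightarrow> 'n list \<Rightarrow> real" where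
  "wedge p w xs = (\<Sum>s\<in>{s. s permutes {..<p}}. of_int (sign s) * (\<Prod>k<p. w k $ (xs ! s k)))"

definition fullcontr :: "real^'n^'n \<Rightarrow> nat \<Rightarrow> ('n list \<Rightarrow> real) \<Rightarrow> ('n list \<Rightarrow> real) \<Rightarrow> real" where
  "fullcontr gi p A B = (\<Sum>xs\<in>tuples p. \<Sum>ys\<in>tuples p.
      A xs * B ys * (\<Prod>k<p. gi $ (xs ! k) $ (ys ! k)))"

definition superenergy :: "real^'n^'n \<Rightarrow> nat \<Rightarrow> ('n list \<Rightarrow> real) \<Rightarrow> 'n \<Rightarrow> 'n \<Rightarrow> real" where
  "superenergy g p \<Omega> a b =
     (-1) ^ (p - 1) / fact (p - 1) *
     ((\<Sum>xs\<in>tuples (p - 1). \<Sum>ys\<in>tuples (p - 1).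
          \<Omega> (a # xs) * \<Omega> (b # ys) * (\<Prod>k<p - 1. matrix_inv g $ (xs ! k) $ (ys ! k)))
      - 1 / (2 * real p) * fullcontr (matrix_inv g) p \<Omega> \<Omega> * g $ a $ b)"

end

theory Submission
  imports Defs Jordan_Normal_Form.Determinant
begin

text \<open>
  Expanding the wedge product as a signed sum over permutations, every contraction of Omega with
  itself becomes a double Leibniz sum in the Gram matrix G k l = omega^k . omega^l of its factors.
  The full contraction is p! det G. Contracting omega^i into the second free index of
  Omega_a... Omega_b^... gives, for each permutation s of the first factor, the determinant of G
  with row 0 replaced by row i and the other rows permuted by s; by repeated rows it vanishes
  unless s 0 = i, which leaves (p-1)! det G omega^i_a. Both terms of T are therefore multiples of
  det G omega^i, and they combine to the stated eigenvalue.
\<close>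

(* Jordan_Normal_Form's vector indexing would clash with the indexing of Cartesian vectors. *)
no_notation Matrix.vec_index (infixl "$" 100)

definition leibniz_det :: "nat \<Rightarrow> (nat \<Rightarrow> nat \<Rightarrow> 'a::comm_ring_1) \<Rightarrow> 'a" where
  "leibniz_det n M = (\<Sum>t | t permutes {..<n}. of_int (sign t) * (\<Prod>j<n. M j (t j)))"

lemma leibniz_det_Suc:
  "leibniz_det (Suc m) M = (\<Sum>t | t permutes {..<Suc m}.
      of_int (sign t) * M 0 (t 0) * (\<Prod>j<m. M (Suc j) (t (Suc j))))"
  unfolding leibniz_det_def prod.lessThan_Suc_shift by (simp add: mult.assoc)

lemma leibniz_det_eq_det: "leibniz_det n M = Determinant.det (mat n n (\<lambda>(i, j). M i j))"
proof -
  have entries: "(\<Prod>j<n. mat n n (\<lambda>(i, j). M i j) $$ (j, t j)) = (\<Prod>j<n. M j (t j))"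
    if "t permutes {..<n}" for t
    using permutes_in_image[OF that] by (intro prod.cong) auto
  show ?thesis
    unfolding det_def'[OF mat_carrier] leibniz_det_def atLeast0LessThan
    by (intro sum.cong refl) (simp add: entries)
qed

lemma leibniz_det_permute_rows:
  assumes "s permutes {..<n}"
  shows "leibniz_det n (\<lambda>j. M (s j)) = of_int (sign s) * leibniz_det n M"
proof -
  have "mat n n (\<lambda>(i, j). M (s i) j) = mat n n (\<lambda>(i, j). mat n n (\<lambda>(i, j). M i j) $$ (s i, j))"
    using permutes_in_image[OF assms] by (intro eq_matI) auto
  then show ?thesis
    using det_permute_rows[of "mat n n (\<lambda>(i, j). M i j)" n s] assms
    by (simp add: leibniz_det_eq_det atLeast0LessThan)
qed

lemma leibniz_det_identical_rows:
  assumes "i \<noteq> j" "i < n" "j < n" "M i = M j"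
  shows "leibniz_det n M = 0"
  unfolding leibniz_det_eq_det
  by (rule det_identical_rows[of _ n i j]) (use assms in \<open>auto simp: Matrix.row_def\<close>)

lemma leibniz_det_replace_row:
  assumes s: "s permutes {..<n}" and "i < n" "k < n"
  shows "leibniz_det n (\<lambda>j. M (if j = k then i else s j))
       = (if s k = i then of_int (sign s) * leibniz_det n M else 0)"
proof (cases "s k = i")
  case True
  then have "(\<lambda>j. M (if j = k then i else s j)) = (\<lambda>j. M (s j))" by auto
  with True show ?thesis using leibniz_det_permute_rows[OF s] by simp
next
  case False
  define j where "j = Hilbert_Choice.inv s i"
  have "s j = i" "j < n"
    using permutes_inverses(1)[OF s] permutes_in_image[OF permutes_inv[OF s]] \<open>i < n\<close>
    by (auto simp: j_def)
  with False have "leibniz_det n (\<lambda>j. M (if j = k then i else s j)) = 0"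
    by (intro leibniz_det_identical_rows[of k j]) (use \<open>k < n\<close> in auto)
  with False show ?thesis by simp
qed

lemma card_permutes_map_to:
  assumes "finite S" "k \<in> S" "i \<in> S"
  shows "card {s. s permutes S \<and> s k = i} = fact (card S - 1)"
proof -
  have "{s. s permutes S \<and> s k = k} = {s. s permutes S - {k}}"
    unfolding permutes_def by auto
  then have fix_k: "card {s. s permutes S \<and> s k = k} = fact (card S - 1)"
    using assms by (simp add: card_permutations)
  let ?f = "\<lambda>s. Transposition.transpose k i \<circ> s"
  have tp: "Transposition.transpose k i permutes S"
    using assms by (intro permutes_swap_id)
  have invol: "?f (?f s) = s" for s :: "'a \<Rightarrow> 'a"
    by (simp add: fun_eq_iff)
  have "bij_betw ?f {s. s permutes S \<and> s k = k} {s. s permutes S \<and> s k = i}"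
    by (rule bij_betw_byWitness[where f' = ?f]) (use invol tp in \<open>auto intro: permutes_compose\<close>)
  with fix_k show ?thesis by (simp add: bij_betw_same_card)
qed

lemma sum_tuples_Suc:
  "(\<Sum>xs\<in>tuples (Suc n). F xs) = (\<Sum>x\<in>UNIV. \<Sum>xs\<in>tuples n. F (x # xs))"
  for F :: "'n::finite list \<Rightarrow> 'a::comm_monoid_add"
proof -
  have image: "tuples (Suc n) = case_prod (#) ` (UNIV \<times> tuples n)"
    by (auto simp: tuples_def length_Suc_conv image_iff)
  have inj: "inj_on (case_prod (#)) (UNIV \<times> tuples n)"
    by (auto simp: inj_on_def)
  show ?thesis
    unfolding image sum.reindex[OF inj] sum.cartesian_product by (simp add: case_prod_beta)
qed

lemma sum_tuples_pairs_prod: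
  "(\<Sum>xs\<in>tuples n. \<Sum>ys\<in>tuples n. \<Prod>k<n. h k (xs ! k) (ys ! k))
     = (\<Prod>k<n. \<Sum>x\<in>UNIV. \<Sum>y\<in>UNIV. h k x y)"
  for h :: "nat \<Rightarrow> 'n::finite \<Rightarrow> 'n \<Rightarrow> 'a::comm_semiring_1"
proof (induction n arbitrary: h)
  case 0
  have "tuples 0 = {[] :: 'n list}" by (auto simp: tuples_def)
  then show ?case by simp
next
  case (Suc n)
  let ?P = "\<lambda>xs ys. \<Prod>k<n. h (Suc k) (xs ! k) (ys ! k)"
  have "(\<Sum>xs\<in>tuples (Suc n). \<Sum>ys\<in>tuples (Suc n). \<Prod>k<Suc n. h k (xs ! k) (ys ! k))
      = (\<Sum>x\<in>UNIV. \<Sum>xs\<in>tuples n. \<Sum>y\<in>UNIV. \<Sum>ys\<in>tuples n. h 0 x y * ?P xs ys)"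
    unfolding sum_tuples_Suc prod.lessThan_Suc_shift by simp
  also have "\<dots> = (\<Sum>x\<in>UNIV. \<Sum>y\<in>UNIV. h 0 x y * (\<Sum>xs\<in>tuples n. \<Sum>ys\<in>tuples n. ?P xs ys))"
    by (rule sum.cong[OF refl], subst sum.swap) (simp add: sum_distrib_left)
  also have "\<dots> = (\<Sum>x\<in>UNIV. \<Sum>y\<in>UNIV. h 0 x y) * (\<Prod>k<n. \<Sum>x\<in>UNIV. \<Sum>y\<in>UNIV. h (Suc k) x y)"
    by (simp add: Suc.IH[of "\<lambda>k. h (Suc k)"] sum_distrib_right)
  also have "\<dots> = (\<Prod>k<Suc n. \<Sum>x\<in>UNIV. \<Sum>y\<in>UNIV. h k x y)"
    unfolding prod.lessThan_Suc_shift by simp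
  finally show ?case .
qed

lemma sum_swap_double:
  "(\<Sum>x\<in>A. \<Sum>y\<in>B. \<Sum>s\<in>S. \<Sum>t\<in>T. f x y s t) = (\<Sum>s\<in>S. \<Sum>t\<in>T. \<Sum>x\<in>A. \<Sum>y\<in>B. f x y s t)"
  by (simp only: sum.swap[where A = B and B = S] sum.swap[where A = B and B = T]
      sum.swap[where A = A and B = S] sum.swap[where A = A and B = T])

definition pairing :: "real^'n^'n \<Rightarrow> real^'n \<Rightarrow> real^'n \<Rightarrow> real" where
  "pairing gi u v = (\<Sum>a\<in>UNIV. \<Sum>c\<in>UNIV. u $ a * gi $ a $ c * v $ c)"

lemma contr_product_tensors:
  "(\<Sum>xs\<in>tuples n. \<Sum>ys\<in>tuples n.
      (\<Prod>j<n. u j $ (xs ! j)) * (\<Prod>j<n. v j $ (ys ! j)) * (\<Prod>k<n. gi $ (xs ! k) $ (ys ! k)))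
   = (\<Prod>k<n. pairing gi (u k) (v k))"
  using sum_tuples_pairs_prod[of "\<lambda>k x y. u k $ x * v k $ y * gi $ x $ y" n]
  by (simp add: prod.distrib pairing_def mult_ac)

lemma contr_sums_of_product_tensors:
  fixes a b :: "_ \<Rightarrow> real"
  shows "(\<Sum>xs\<in>tuples n. \<Sum>ys\<in>tuples n.
      (\<Sum>s\<in>S. a s * (\<Prod>j<n. u s j $ (xs ! j))) * (\<Sum>t\<in>T. b t * (\<Prod>j<n. v t j $ (ys ! j)))
        * (\<Prod>k<n. gi $ (xs ! k) $ (ys ! k)))
    = (\<Sum>s\<in>S. \<Sum>t\<in>T. a s * b t * (\<Prod>k<n. pairing gi (u s k) (v t k)))"
proof -
  let ?U = "\<lambda>s xs. \<Prod>j<n. u s j $ (xs ! j)" and ?V = "\<lambda>t ys. \<Prod>j<n. v t j $ (ys ! j)"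
    and ?G = "\<lambda>xs ys. \<Prod>k<n. gi $ (xs ! k) $ (ys ! k)"
  have "(\<Sum>s\<in>S. a s * ?U s xs) * (\<Sum>t\<in>T. b t * ?V t ys) * ?G xs ys
      = (\<Sum>s\<in>S. \<Sum>t\<in>T. a s * b t * (?U s xs * ?V t ys * ?G xs ys))" for xs ys
    unfolding sum_product unfolding sum_distrib_right by (intro sum.cong refl) (simp only: mult_ac)
  then show ?thesis
    by (simp add: sum_swap_double[where A = "tuples n"] contr_product_tensors
        flip: sum_distrib_left)
qed

lemma wedge_eq_sum_permutes:
  "wedge p w xs = (\<Sum>s | s permutes {..<p}. of_int (sign s) * (\<Prod>j<p. w (s j) $ (xs ! j)))"
proof -
  have "of_int (sign (Hilbert_Choice.inv s)) * (\<Prod>k<p. w k $ (xs ! Hilbert_Choice.inv s k))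
      = of_int (sign s) * (\<Prod>j<p. w (s j) $ (xs ! j))" if s: "s permutes {..<p}" for s
  proof -
    have "sign (Hilbert_Choice.inv s) = sign s"
      using sign_inverse permutes_imp_permutation[OF finite_lessThan s] by blast
    moreover have "(\<Prod>k<p. w k $ (xs ! Hilbert_Choice.inv s k)) = (\<Prod>j<p. w (s j) $ (xs ! j))"
      using prod.permute[OF s, of "\<lambda>k. w k $ (xs ! Hilbert_Choice.inv s k)"]
      by (simp add: permutes_inverses[OF s] o_def)
    ultimately show ?thesis by simp
  qed
  then show ?thesis
    unfolding wedge_def by (subst sum_permutations_inverse) (intro sum.cong; simp)
qed

lemma wedge_Cons:
  "wedge (Suc m) w (x # xs) = (\<Sum>s | s permutes {..<Suc m}.
      (of_int (sign s) * w (s 0) $ x) * (\<Prod>j<m. w (s (Suc j)) $ (xs ! j)))"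
  unfolding wedge_eq_sum_permutes prod.lessThan_Suc_shift by (simp add: mult.assoc)

definition gram :: "real^'n^'n \<Rightarrow> (nat \<Rightarrow> real^'n) \<Rightarrow> nat \<Rightarrow> nat \<Rightarrow> real" where
  "gram gi w k l = pairing gi (w k) (w l)"

lemma fullcontr_wedge_self:
  "fullcontr gi p (wedge p w) (wedge p w) = fact p * leibniz_det p (gram gi w)"
proof -
  let ?P = "{s. s permutes {..<p}}"
  have "fullcontr gi p (wedge p w) (wedge p w)
      = (\<Sum>s\<in>?P. \<Sum>t\<in>?P. of_int (sign s) * of_int (sign t) * (\<Prod>k<p. gram gi w (s k) (t k)))"
    unfolding fullcontr_def wedge_eq_sum_permutes contr_sums_of_product_tensors gram_def ..
  also have "\<dots> = (\<Sum>s\<in>?P. of_int (sign s) * leibniz_det p (\<lambda>j. gram gi w (s j)))"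
    by (simp add: leibniz_det_def sum_distrib_left mult.assoc)
  also have "\<dots> = (\<Sum>s\<in>?P. leibniz_det p (gram gi w))"
    by (intro sum.cong refl) (simp add: leibniz_det_permute_rows flip: mult.assoc of_int_mult)
  also have "\<dots> = fact p * leibniz_det p (gram gi w)"
    by (simp add: card_permutations)
  finally show ?thesis .
qed

definition contr_tail :: "real^'n^'n \<Rightarrow> nat \<Rightarrow> ('n list \<Rightarrow> real) \<Rightarrow> ('n list \<Rightarrow> real) \<Rightarrow> 'n \<Rightarrow> 'n \<Rightarrow> real" where
  "contr_tail gi n A B a b = (\<Sum>xs\<in>tuples n. \<Sum>ys\<in>tuples n.
      A (a # xs) * B (b # ys) * (\<Prod>k<n. gi $ (xs ! k) $ (ys ! k)))"

lemma superenergy_eq_contr_tail: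
  "superenergy g p \<Omega> a b = (-1) ^ (p - 1) / fact (p - 1) *
     (contr_tail (matrix_inv g) (p - 1) \<Omega> \<Omega> a b
      - fullcontr (matrix_inv g) p \<Omega> \<Omega> / (2 * real p) * g $ a $ b)"
  unfolding superenergy_def contr_tail_def by simp

lemma contr_tail_wedge:
  "contr_tail gi m (wedge (Suc m) w) (wedge (Suc m) w) x y
   = (\<Sum>s | s permutes {..<Suc m}. \<Sum>t | t permutes {..<Suc m}.
        (of_int (sign s) * w (s 0) $ x) * (of_int (sign t) * w (t 0) $ y)
        * (\<Prod>k<m. gram gi w (s (Suc k)) (t (Suc k))))"
  unfolding contr_tail_def wedge_Cons contr_sums_of_product_tensors gram_def ..

lemma contr_tail_wedge_eigen:
  assumes "i < Suc m"
  shows "(\<Sum>a\<in>UNIV. \<Sum>c\<in>UNIV. w i $ a * gi $ a $ c * contr_tail gi m (wedge (Suc m) w) (wedge (Suc m) w) b c)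
       = fact m * leibniz_det (Suc m) (gram gi w) * w i $ b"
proof -
  let ?P = "{s. s permutes {..<Suc m}}" and ?D = "leibniz_det (Suc m) (gram gi w)"
  let ?F = "\<lambda>s t. (of_int (sign s) * w (s 0) $ b) * of_int (sign t)
      * (\<Prod>k<m. gram gi w (s (Suc k)) (t (Suc k)))"
  have "(\<Sum>a\<in>UNIV. \<Sum>c\<in>UNIV. w i $ a * gi $ a $ c * contr_tail gi m (wedge (Suc m) w) (wedge (Suc m) w) b c)
      = (\<Sum>a\<in>UNIV. \<Sum>c\<in>UNIV. \<Sum>s\<in>?P. \<Sum>t\<in>?P. w i $ a * gi $ a $ c * (?F s t * w (t 0) $ c))"
    unfolding contr_tail_wedge sum_distrib_left by (intro sum.cong refl) (simp only: mult_ac)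
  also have "\<dots> = (\<Sum>s\<in>?P. \<Sum>t\<in>?P. ?F s t * gram gi w i (t 0))"
    unfolding sum_swap_double[where A = UNIV]
    by (intro sum.cong refl) (simp add: gram_def[of gi w i] pairing_def sum_distrib_left mult_ac)
  also have "\<dots> = (\<Sum>s\<in>?P. of_int (sign s) * w (s 0) $ b
      * leibniz_det (Suc m) (\<lambda>j. gram gi w (if j = 0 then i else s j)))"
    by (intro sum.cong refl) (simp add: leibniz_det_Suc sum_distrib_left mult_ac)
  also have "\<dots> = (\<Sum>s\<in>?P. if s 0 = i then w i $ b * ?D else 0)"
    using assms
    by (intro sum.cong refl) (simp add: leibniz_det_replace_row flip: mult.assoc of_int_mult)
  also have "\<dots> = (\<Sum>s\<in>{s \<in> ?P. s 0 = i}. w i $ b * ?D)"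
    using finite_permutations[OF finite_lessThan] by (rule sum.inter_filter[symmetric])
  also have "\<dots> = fact m * ?D * w i $ b"
    using card_permutes_map_to[of "{..<Suc m}" 0 i] assms by simp
  finally show ?thesis .
qed

lemma lorentzian_invertible:
  fixes g :: "real^'n^'n"
  assumes "lorentzian g"
  shows "invertible g"
proof -
  obtain E :: "real^'n^'n" and i0 where
    J: "\<And>i j. (transpose E ** g ** E) $ i $ j = (if i = j then (if i = i0 then 1 else -1) else 0)"
    using assms unfolding lorentzian_def by blast
  have "Determinants.det (transpose E ** g ** E) \<noteq> 0"
    by (subst det_diagonal) (simp_all add: J)
  then have "Determinants.det g \<noteq> 0"
    by (simp add: det_mul)
  then show ?thesis
    by (simp add: invertible_det_nz)
qed

lemma matrix_inv_left: "invertible A \<Longrightarrow> matrix_inv A ** A = Finite_Cartesian_Product.mat 1"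
  unfolding invertible_def matrix_inv_def by (rule someI2_ex) auto

lemma contr_matrix_inv_symmetric:
  fixes g :: "real^'n^'n"
  assumes "invertible g" and "transpose g = g"
  shows "(\<Sum>a\<in>UNIV. \<Sum>c\<in>UNIV. v $ a * matrix_inv g $ a $ c * g $ b $ c) = v $ b"
proof -
  have "g $ c $ b = g $ b $ c" for c
    using arg_cong[OF assms(2), of "\<lambda>M. M $ c $ b"] by (simp add: transpose_def)
  then have "(\<Sum>c\<in>UNIV. matrix_inv g $ a $ c * g $ b $ c) = (matrix_inv g ** g) $ a $ b" for a
    by (simp add: matrix_matrix_mult_def)
  then have delta: "(\<Sum>c\<in>UNIV. matrix_inv g $ a $ c * g $ b $ c) = (if a = b then 1 else 0)" for a
    by (simp add: matrix_inv_left[OF assms(1)] Finite_Cartesian_Product.mat_def)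
  show ?thesis
    by (simp add: mult.assoc delta flip: sum_distrib_left) (simp add: if_distrib cong: if_cong)
qed

theorem mainTheorem6:
  fixes g :: "real^'n^'n" and p :: nat and w :: "nat \<Rightarrow> real^'n"
  assumes "lorentzian g"
    and "1 \<le> p" and "p \<le> CARD('n)"
    and "inj_on w {..<p}" and "independent (w ` {..<p})"
  shows "\<forall>i<p. \<forall>b.
     (\<Sum>a\<in>UNIV. \<Sum>c\<in>UNIV. w i $ a * matrix_inv g $ a $ c * superenergy g p (wedge p w) b c)
     = (-1) ^ (p - 1) * fullcontr (matrix_inv g) p (wedge p w) (wedge p w) / (2 * fact p) * w i $ b"
proof (intro allI impI)
  fix i b
  assume "i < p"
  obtain m where p: "p = Suc m"
    using \<open>1 \<le> p\<close> by (cases p) auto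
  let ?gi = "matrix_inv g" and ?\<Omega> = "wedge p w" and ?D = "leibniz_det p (gram (matrix_inv g) w)"
  have g: "invertible g" "transpose g = g"
    using assms(1) lorentzian_invertible unfolding lorentzian_def by auto
  have linear: "(\<Sum>a\<in>UNIV. \<Sum>c\<in>UNIV. x a * y a c * (C * (f c - K * h c)))
      = C * ((\<Sum>a\<in>UNIV. \<Sum>c\<in>UNIV. x a * y a c * f c) - K * (\<Sum>a\<in>UNIV. \<Sum>c\<in>UNIV. x a * y a c * h c))"
    for x f h :: "'n \<Rightarrow> real" and y :: "'n \<Rightarrow> 'n \<Rightarrow> real" and C K :: real
    by (simp add: algebra_simps sum_subtractf sum_distrib_left)
  have "(\<Sum>a\<in>UNIV. \<Sum>c\<in>UNIV. w i $ a * ?gi $ a $ c * superenergy g p ?\<Omega> b c)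
      = (-1) ^ (p - 1) / fact (p - 1) *
        ((\<Sum>a\<in>UNIV. \<Sum>c\<in>UNIV. w i $ a * ?gi $ a $ c * contr_tail ?gi (p - 1) ?\<Omega> ?\<Omega> b c)
          - fullcontr ?gi p ?\<Omega> ?\<Omega> / (2 * real p) * (\<Sum>a\<in>UNIV. \<Sum>c\<in>UNIV. w i $ a * ?gi $ a $ c * g $ b $ c))"
    unfolding superenergy_eq_contr_tail by (rule linear)
  also have "\<dots> = (-1) ^ m / fact m * (fact m * ?D * w i $ b - fact p * ?D / (2 * real p) * w i $ b)"
    using \<open>i < p\<close>
    by (simp add: p contr_tail_wedge_eigen fullcontr_wedge_self contr_matrix_inv_symmetric[OF g])
  also have "\<dots> = (-1) ^ (p - 1) * (fact p * ?D) / (2 * fact p) * w i $ b"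
    by (simp add: p field_simps)
  finally show "(\<Sum>a\<in>UNIV. \<Sum>c\<in>UNIV. w i $ a * ?gi $ a $ c * superenergy g p ?\<Omega> b c)
      = (-1) ^ (p - 1) * fullcontr ?gi p ?\<Omega> ?\<Omega> / (2 * fact p) * w i $ b"
    by (simp only: fullcontr_wedge_self)
qed

end
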